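(* Let $s\in(0,1)$, $\alpha>0$, let $\Omega\subset\mathbb{R}^n$ be open, and let $u\in L_s(\mathbb{R}^n)$ with $e^{\alpha u}\in L^1(\Omega)$. Then $t^{1-2s}e^{\alpha\overline{u}}\in L^1_{\mathrm{loc}}(\Omega\times[0,\infty))$; that is, for every open $\Omega_0\Subset\Omega$ and every $R>0$, $\int_0^R\int_{\Omega_0}t^{1-2s}e^{\alpha\overline{u}(x,t)}dxdt<\infty$.
   Context: $L_s(\mathbb{R}^n)=\{u\in L^1_{\mathrm{loc}}:\int\frac{|u|}{1+|x|^{n+2s}}<\infty\}$. $\overline{u}(x,t)=\int_{\mathbb{R}^n}P(X,y)u(y)dy$ for $X=(x,t)$, $t>0$, with $P(X,y)=d_{n,s}\frac{t^{2s}}{|(x-y,t)|^{n+2s}}$ and $d_{n,s}>0$ such that $\int P(X,y)dy=1$. *)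

theory Defs
  imports "HOL-Analysis.Analysis"
begin

text \<open>Points of R^n are elements of a Euclidean space 'a with n = DIM('a).\<close>

definition L_s :: "real \<Rightarrow> ('a::euclidean_space \<Rightarrow> real) set" where
  "L_s s = {u. u \<in> borel_measurable lebesgue
              \<and> (\<forall>K. compact K \<longrightarrow> set_integrable lebesgue K u)
              \<and> integrable lebesgue
                  (\<lambda>x. \<bar>u x\<bar> / (1 + norm x powr (real DIM('a) + 2 * s)))}"

definition kern :: "real \<Rightarrow> 'a::euclidean_space \<Rightarrow> real \<Rightarrow> 'a \<Rightarrow> real" where
  "kern s x t y = t powr (2 * s) /
      (sqrt (norm (x - y)^2 + t^2)) powr (real DIM('a) + 2 * s)"

text \<open>The constant d_{n,s}, chosen so that the kernel integrates to 1 in y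
  (the integral of kern is independent of (x,t) with t > 0; we normalize at x = 0, t = 1).\<close>
definition poisson_const :: "real \<Rightarrow> 'a::euclidean_space itself \<Rightarrow> real" where
  "poisson_const s _ = 1 / (LINT y|lebesgue. kern s (0::'a) 1 y)"

definition poisson_kernel :: "real \<Rightarrow> 'a::euclidean_space \<Rightarrow> real \<Rightarrow> 'a \<Rightarrow> real" where
  "poisson_kernel s x t y = poisson_const s TYPE('a) * kern s x t y"

definition ext :: "real \<Rightarrow> ('a::euclidean_space \<Rightarrow> real) \<Rightarrow> 'a \<Rightarrow> real \<Rightarrow> real" where
  "ext s u x t = (LINT y|lebesgue. poisson_kernel s x t y * u y)"

end

theory Submission
  imports Defs
begin

(*
  Fix \<Omega>0 and R, choose a bounded neighbourhood A of closure \<Omega>0 inside \<Omega>, and split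
  u = u 1_A + u 1_(-A). For x \<in> \<Omega>0 and 0 < t \<le> R the Poisson kernel P((x,t),y) with y \<notin> A is
  bounded by C / (1 + |y|^(n+2s)), so the far part of u-bar is at most C \<parallel>u\<parallel>_(L_s). Since P((x,t),.)
  is a probability density, Jensen's inequality bounds exp of \<alpha> times the near part by
  \<integral> P e^(\<alpha> u 1_A) + 1, and integrating in x (Tonelli, with \<integral> P((x,t),y) dx = 1) bounds
  \<integral>_\<Omega>0 e^(\<alpha> u-bar(x,t)) dx by a constant independent of t. It remains that \<integral>_0^R t^(1-2s) dt < \<infinity>
  because s < 1.
*)

lemma nn_integral_one_plus_square_powr_finite:
  fixes q :: real
  assumes q: "1/2 < q"
  shows "(\<integral>\<^sup>+x. ennreal ((1 + x\<^sup>2) powr (-q)) \<partial>lborel) < \<infinity>"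
proof -
  define T where "T x = ennreal (indicator {1..} x * x powr (-2*q))" for x :: real
  have tail: "(\<integral>\<^sup>+x. T x \<partial>lborel) = ennreal (-(1 powr (-2*q+1)) / (-2*q+1))"
    unfolding T_def using q
    by (intro nn_integral_has_integral_lebesgue has_integral_powr_to_inf) auto
  have T_measurable [measurable]: "T \<in> borel_measurable borel"
    unfolding T_def by measurable
  then have reflected_tail: "(\<integral>\<^sup>+x. T (-x) \<partial>lborel) = (\<integral>\<^sup>+x. T x \<partial>lborel)"
    using nn_integral_real_affine[of T "-1" 0] by simp
  have bound: "ennreal ((1 + x\<^sup>2) powr (-q)) \<le> indicator {-1..1} x + T x + T (-x)" for x :: real
  proof (cases "\<bar>x\<bar> \<le> 1")
    case True
    have "(1 + x\<^sup>2) powr (-q) \<le> 1"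
      using q by (simp add: powr_minus inverse_le_1_iff ge_one_powr_ge_zero)
    then have "ennreal ((1 + x\<^sup>2) powr (-q)) \<le> indicator {-1..1} x"
      using True by (simp add: indicator_def abs_le_iff)
    then show ?thesis by (intro add_increasing2) auto
  next
    case False
    have "(1 + x\<^sup>2) powr (-q) \<le> (\<bar>x\<bar> powr 2) powr (-q)"
      using q False by (intro powr_mono2') (auto simp: powr_numeral)
    also have "\<dots> = \<bar>x\<bar> powr (-2*q)"
      unfolding powr_powr by simp
    finally show ?thesis
      using False by (auto simp: T_def indicator_def abs_if split: if_splits)
  qed
  have "(\<integral>\<^sup>+x. ennreal ((1 + x\<^sup>2) powr (-q)) \<partial>lborel)
      \<le> (\<integral>\<^sup>+x. indicator {-1..1} x + T x + T (-x) \<partial>lborel)"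
    by (rule nn_integral_mono) (rule bound)
  also have "\<dots> = emeasure lborel {-1..1::real} + (\<integral>\<^sup>+x. T x \<partial>lborel) + (\<integral>\<^sup>+x. T (-x) \<partial>lborel)"
    by (subst nn_integral_add; (subst nn_integral_add)?) (simp_all, measurable)
  also have "\<dots> < \<infinity>"
    unfolding reflected_tail tail by simp
  finally show ?thesis .
qed

lemma exp_integral_le_integral_exp:
  fixes w f :: "'b \<Rightarrow> real"
  assumes w: "integrable M w" and w_nonneg: "\<And>y. 0 \<le> w y" and w_one: "integral\<^sup>L M w = 1"
    and wf: "integrable M (\<lambda>y. w y * f y)" and wexp: "integrable M (\<lambda>y. w y * exp (f y))"
  shows "exp (LINT y|M. w y * f y) \<le> (LINT y|M. w y * exp (f y))"
proof -
  define m where "m = (LINT y|M. w y * f y)"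
  have tangent: "exp m * w y + exp m * (w y * f y) - exp m * m * w y \<le> w y * exp (f y)" for y
  proof -
    have "exp m * (1 + (f y - m)) \<le> exp m * exp (f y - m)"
      by (simp add: exp_ge_add_one_self)
    then have "w y * (exp m * (1 + (f y - m))) \<le> w y * exp (f y)"
      by (simp add: exp_diff mult_left_mono[OF _ w_nonneg])
    then show ?thesis
      by (simp add: algebra_simps)
  qed
  have "exp m = (LINT y|M. exp m * w y + exp m * (w y * f y) - exp m * m * w y)"
    using w wf w_one by (simp add: m_def)
  also have "\<dots> \<le> (LINT y|M. w y * exp (f y))"
    using w wf wexp tangent by (intro Bochner_Integration.integral_mono) auto
  finally show ?thesis
    unfolding m_def .
qed

lemma sigma_finite_lebesgue: "sigma_finite_measure (lebesgue :: 'a::euclidean_space measure)"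
proof
  obtain A :: "'a set set" where "countable A" "A \<subseteq> sets lborel" "\<Union>A = space lborel"
      "\<forall>a\<in>A. emeasure lborel a \<noteq> \<infinity>"
    using sigma_finite_measure.sigma_finite_countable[OF sigma_finite_lborel] by blast
  then show "\<exists>A::'a set set. countable A \<and> A \<subseteq> sets lebesgue \<and> \<Union>A = space lebesgue
      \<and> (\<forall>a\<in>A. emeasure lebesgue a \<noteq> \<infinity>)"
    by (intro exI[of _ A]) auto
qed

lemma one_plus_norm_powr_le_dist_powr:
  fixes x y :: "'a::real_normed_vector"
  assumes p: "0 \<le> p" and \<delta>: "0 < \<delta>" "\<delta> \<le> dist x y" and M: "norm x \<le> M"
  shows "1 + norm y powr p \<le> (\<delta> powr (-p) + (1 + M / \<delta>) powr p) * dist x y powr p"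
proof -
  define D where "D = dist x y"
  have D: "0 < D" "\<delta> \<le> D"
    using \<delta> by (auto simp: D_def)
  have "1 \<le> (D / \<delta>) powr p"
    using D \<delta> p by (intro ge_one_powr_ge_zero) auto
  also have "\<dots> = D powr p / \<delta> powr p"
    using D \<delta> by (simp add: powr_divide)
  also have "\<dots> = \<delta> powr (-p) * D powr p"
    by (simp add: powr_minus divide_inverse mult.commute)
  finally have one: "1 \<le> \<delta> powr (-p) * D powr p" .
  have "0 \<le> M"
    using M norm_ge_zero[of x] by linarith
  moreover have "1 \<le> D / \<delta>"
    using D \<delta> by simp
  ultimately have "M * 1 \<le> M * (D / \<delta>)"
    by (intro mult_left_mono)
  moreover have "norm y \<le> M + D"
    using M norm_triangle_sub[of y x] by (simp add: D_def dist_norm norm_minus_commute)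
  ultimately have "norm y \<le> D * (1 + M / \<delta>)"
    by (simp add: algebra_simps)
  then have "norm y powr p \<le> (D * (1 + M / \<delta>)) powr p"
    using p by (intro powr_mono2) auto
  also have "\<dots> = (1 + M / \<delta>) powr p * D powr p"
    using D \<delta> M norm_ge_zero[of x] by (simp add: powr_mult mult.commute)
  finally show ?thesis
    using one by (simp add: D_def distrib_right)
qed

lemma compact_subset_open_margin:
  fixes K \<Omega> :: "'a::real_normed_vector set"
  assumes "compact K" "open \<Omega>" "K \<subseteq> \<Omega>"
  obtains A \<delta> M where "open A" "bounded A" "A \<subseteq> \<Omega>" "0 < \<delta>" "\<And>x. x \<in> K \<Longrightarrow> norm x \<le> M"
    "\<And>x y. x \<in> K \<Longrightarrow> y \<notin> A \<Longrightarrow> \<delta> \<le> dist x y"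
proof -
  obtain \<delta> where \<delta>: "0 < \<delta>" "(\<Union>x\<in>K. ball x \<delta>) \<subseteq> \<Omega>"
    using compact_subset_open_imp_ball_epsilon_subset[OF assms] by blast
  obtain M where M: "\<And>x. x \<in> K \<Longrightarrow> norm x \<le> M"
    using compact_imp_bounded[OF assms(1)] unfolding bounded_iff by blast
  have "\<delta> \<le> dist x y" if "x \<in> K" "y \<notin> \<Omega> \<inter> ball 0 (M + \<delta>)" for x y
  proof (cases "y \<in> \<Omega>")
    case True
    then have "M + \<delta> \<le> norm y"
      using that(2) by simp
    then show ?thesis
      using M[OF that(1)] norm_triangle_ineq3[of y x] by (simp add: dist_norm norm_minus_commute)
  next
    case False
    then show ?thesis
      using \<delta>(2) that(1) by (force simp: not_less)
  qed
  then show ?thesis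
    using \<delta> M assms(2) by (intro that[of "\<Omega> \<inter> ball 0 (M + \<delta>)"]) auto
qed

lemma nn_integral_powr_weighted_finite:
  fixes F :: "real \<Rightarrow> ennreal"
  assumes a: "-1 < a" and R: "0 < R" and B: "B < \<infinity>"
    and F: "\<And>t. 0 < t \<Longrightarrow> t < R \<Longrightarrow> F t \<le> ennreal (t powr a) * B"
  shows "(\<integral>\<^sup>+t. F t * indicator {0<..<R} t \<partial>lborel) < \<infinity>"
proof -
  have "(\<integral>\<^sup>+t. F t * indicator {0<..<R} t \<partial>lborel) \<le> (\<integral>\<^sup>+t. B * ennreal (indicator {0..R} t * t powr a) \<partial>lborel)"
    using F by (intro nn_integral_mono) (auto simp: indicator_def mult.commute)
  also have "\<dots> = B * ennreal (R powr (a + 1) / (a + 1))"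
  proof -
    have "(\<integral>\<^sup>+t. ennreal (indicator {0..R} t * t powr a) \<partial>lborel) = ennreal (R powr (a + 1) / (a + 1))"
      by (rule nn_integral_has_integral_lebesgue[OF _ has_integral_powr_from_0[OF a]]) (use R in auto)
    then show ?thesis
      by (simp add: nn_integral_cmult)
  qed
  also have "\<dots> < \<infinity>"
    using B by (simp add: ennreal_mult_less_top)
  finally show ?thesis .
qed

section \<open>The unnormalised kernel\<close>

lemma kern_nonneg: "0 \<le> kern s x t y"
  unfolding kern_def by simp

lemma kern_commute: "kern s x t y = kern s y t x"
  unfolding kern_def by (simp add: norm_minus_commute)

lemma kern_measurable [measurable]: "(\<lambda>y. kern s x t y) \<in> borel_measurable borel"
  unfolding kern_def by measurable

lemma kern_measurable_lebesgue [measurable]: "(\<lambda>y. kern s x t y) \<in> borel_measurable lebesgue"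
  by (rule measurable_completion) simp

lemma kern_measurable_pair [measurable]:
  "(\<lambda>z. kern s (fst z) t (snd z))
     \<in> borel_measurable (lebesgue \<Otimes>\<^sub>M (lebesgue :: 'a::euclidean_space measure))"
proof -
  have pair: "(\<lambda>z. (fst z, snd z)) \<in> (lebesgue \<Otimes>\<^sub>M (lebesgue :: 'a measure)) \<rightarrow>\<^sub>M (lborel \<Otimes>\<^sub>M lborel)"
    by (intro measurable_Pair measurable_compose[OF measurable_fst] measurable_compose[OF measurable_snd]
        measurable_completion) auto
  have "(\<lambda>z. kern s (fst z) t (snd z)) \<in> borel_measurable (lborel \<Otimes>\<^sub>M (lborel :: 'a measure))"
    unfolding kern_def by measurable
  then show ?thesis
    using measurable_compose[OF pair] by simp
qed

lemma kern_zero_one_eq: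
  "kern s (0::'a::euclidean_space) 1 y = (1 + (norm y)\<^sup>2) powr (- ((real DIM('a) + 2 * s) / 2))"
proof -
  have "sqrt ((norm y)\<^sup>2 + 1) = (1 + (norm y)\<^sup>2) powr (1/2)"
    by (simp add: powr_half_sqrt add.commute)
  then have "sqrt ((norm y)\<^sup>2 + 1) powr (real DIM('a) + 2 * s)
      = (1 + (norm y)\<^sup>2) powr ((real DIM('a) + 2 * s) / 2)"
    by (simp add: powr_powr)
  then show ?thesis
    by (simp add: kern_def powr_minus_divide)
qed

lemma kern_zero_one_le_prod:
  assumes "0 < s"
  shows "kern s (0::'a::euclidean_space) 1 y
    \<le> (\<Prod>b\<in>Basis. (1 + (y \<bullet> b)\<^sup>2) powr (- ((real DIM('a) + 2 * s) / (2 * DIM('a)))))"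
proof -
  define q where "q = (real DIM('a) + 2 * s) / (2 * DIM('a))"
  have "(1 + (norm y)\<^sup>2) powr (-q) \<le> (1 + (y \<bullet> b)\<^sup>2) powr (-q)" if "b \<in> Basis" for b :: 'a
  proof -
    have "\<bar>y \<bullet> b\<bar>\<^sup>2 \<le> (norm y)\<^sup>2"
      using Basis_le_norm[OF that] by (intro power_mono) auto
    then show ?thesis
      using assms by (intro powr_mono2') (auto simp: q_def add_pos_nonneg)
  qed
  then have "(\<Prod>b\<in>(Basis::'a set). (1 + (norm y)\<^sup>2) powr (-q)) \<le> (\<Prod>b\<in>Basis. (1 + (y \<bullet> b)\<^sup>2) powr (-q))"
    by (intro prod_mono) auto
  moreover have "(\<Prod>b\<in>(Basis::'a set). (1 + (norm y)\<^sup>2) powr (-q)) = (1 + (norm y)\<^sup>2) powr (DIM('a) * -q)"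
    by (simp add: powr_power add_nonneg_eq_0_iff)
  moreover have "DIM('a) * -q = - ((real DIM('a) + 2 * s) / 2)"
    by (simp add: q_def)
  ultimately have "kern s (0::'a) 1 y \<le> (\<Prod>b\<in>Basis. (1 + (y \<bullet> b)\<^sup>2) powr (-q))"
    by (metis kern_zero_one_eq)
  then show ?thesis
    unfolding q_def .
qed

(* The product bound reduces integrability on R^n to the one-dimensional case via Tonelli. *)
lemma nn_integral_kern_zero_one_finite:
  assumes "0 < s"
  shows "(\<integral>\<^sup>+y. ennreal (kern s (0::'a::euclidean_space) 1 y) \<partial>lborel) < \<infinity>"
proof -
  define q where "q = (real DIM('a) + 2 * s) / (2 * DIM('a))"
  have q: "1/2 < q"
    using assms by (simp add: q_def field_simps)
  have "(\<integral>\<^sup>+y. ennreal (kern s (0::'a) 1 y) \<partial>lborel)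
      \<le> (\<integral>\<^sup>+(y::'a). (\<Prod>b\<in>Basis. ennreal ((1 + (y \<bullet> b)\<^sup>2) powr (-q))) \<partial>lborel)"
    using kern_zero_one_le_prod[OF assms, where 'a='a]
    by (intro nn_integral_mono) (simp add: prod_ennreal q_def ennreal_leI)
  also have "\<dots> = (\<Prod>b\<in>(Basis::'a set). (\<integral>\<^sup>+x. ennreal ((1 + x\<^sup>2) powr (-q)) \<partial>lborel))"
    by (rule nn_integral_lborel_prod) auto
  also have "\<dots> < \<infinity>"
    using nn_integral_one_plus_square_powr_finite[OF q] by (simp add: power_less_top_ennreal)
  finally show ?thesis .
qed

lemma kern_rescale:
  fixes x :: "'a::euclidean_space"
  assumes t: "0 < t"
  shows "t ^ DIM('a) * kern s x t (x + t *\<^sub>R z) = kern s 0 1 z"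
proof -
  have "(norm (x - (x + t *\<^sub>R z)))\<^sup>2 + t\<^sup>2 = t\<^sup>2 * ((norm z)\<^sup>2 + 1)"
    using t by (simp add: power_mult_distrib algebra_simps)
  then have "sqrt ((norm (x - (x + t *\<^sub>R z)))\<^sup>2 + t\<^sup>2) = t * sqrt ((norm z)\<^sup>2 + 1)"
    using t by (simp add: real_sqrt_mult)
  then have "kern s x t (x + t *\<^sub>R z)
      = t powr (2 * s) / (t powr (real DIM('a) + 2 * s) * sqrt ((norm z)\<^sup>2 + 1) powr (real DIM('a) + 2 * s))"
    using t by (simp add: kern_def powr_mult)
  also have "\<dots> = 1 / (t powr (real DIM('a)) * sqrt ((norm z)\<^sup>2 + 1) powr (real DIM('a) + 2 * s))"
    using t by (simp add: powr_add field_simps)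
  finally show ?thesis
    using t by (simp add: kern_def powr_realpow)
qed

lemma nn_integral_kern_eq:
  fixes x :: "'a::euclidean_space"
  assumes t: "0 < t"
  shows "(\<integral>\<^sup>+y. ennreal (kern s x t y) \<partial>lborel) = (\<integral>\<^sup>+y. ennreal (kern s (0::'a) 1 y) \<partial>lborel)"
proof -
  have "(\<integral>\<^sup>+y. ennreal (kern s x t y) \<partial>lborel)
      = (\<integral>\<^sup>+y. ennreal (kern s x t y) \<partial>density (distr lborel borel (\<lambda>z. x + t *\<^sub>R z)) (\<lambda>_. \<bar>t\<bar> ^ DIM('a)))"
    using lborel_affine[of t x] t by simp
  also have "\<dots> = (\<integral>\<^sup>+z. ennreal (\<bar>t\<bar> ^ DIM('a)) * ennreal (kern s x t (x + t *\<^sub>R z)) \<partial>lborel)"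
    by (simp add: nn_integral_density nn_integral_distr)
  also have "\<dots> = (\<integral>\<^sup>+z. ennreal (kern s (0::'a) 1 z) \<partial>lborel)"
    using t by (intro nn_integral_cong) (simp add: ennreal_mult'[symmetric] kern_rescale kern_nonneg)
  finally show ?thesis .
qed

lemma integrable_kern:
  fixes x :: "'a::euclidean_space"
  assumes "0 < s" "0 < t"
  shows "integrable lborel (kern s x t)"
  using nn_integral_kern_eq[OF assms(2), of s x] nn_integral_kern_zero_one_finite[OF assms(1), where 'a='a]
  by (intro integrableI_nonneg) (simp_all add: kern_nonneg)

lemma integral_kern_eq:
  fixes x :: "'a::euclidean_space"
  assumes "0 < t"
  shows "integral\<^sup>L lborel (kern s x t) = integral\<^sup>L lborel (kern s (0::'a) 1)"
  using nn_integral_kern_eq[OF assms, of s x]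
  by (simp add: integral_eq_nn_integral kern_nonneg)

lemma integral_kern_zero_one_pos:
  assumes "0 < s"
  shows "0 < integral\<^sup>L lborel (kern s (0::'a::euclidean_space) 1)"
proof -
  have pos: "0 < kern s (0::'a) 1 y" for y
  proof -
    have "0 < (norm y)\<^sup>2 + 1"
      by (simp add: add_nonneg_pos)
    then show ?thesis
      unfolding kern_def by simp
  qed
  have "(\<integral>\<^sup>+y. ennreal (kern s (0::'a) 1 y) \<partial>lborel) \<noteq> 0"
  proof
    assume "(\<integral>\<^sup>+y. ennreal (kern s (0::'a) 1 y) \<partial>lborel) = 0"
    then have "AE y in lborel. ennreal (kern s (0::'a) 1 y) = 0"
      by (simp add: nn_integral_0_iff_AE)
    then have "AE y in (lborel::'a measure). False"
      by eventually_elim (use pos in \<open>simp add: less_imp_neq[symmetric]\<close>)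
    then show False
      by (simp add: eventually_False ae_filter_eq_bot_iff)
  qed
  then show ?thesis
    using integrable_kern[OF assms zero_less_one, of "0::'a"] nn_integral_kern_zero_one_finite[OF assms, where 'a='a]
    by (simp add: integral_eq_nn_integral kern_nonneg enn2real_positive_iff zero_less_iff_neq_zero)
qed

lemma kern_le_powr_neg_dim:
  fixes x y :: "'a::euclidean_space"
  assumes "0 < s" "0 < t"
  shows "kern s x t y \<le> t powr (- real DIM('a))"
proof -
  have "t powr (real DIM('a) + 2 * s) \<le> sqrt ((norm (x - y))\<^sup>2 + t\<^sup>2) powr (real DIM('a) + 2 * s)"
    using assms by (intro powr_mono2 real_le_rsqrt) auto
  then have "kern s x t y \<le> t powr (2 * s) / t powr (real DIM('a) + 2 * s)"
    unfolding kern_def using assms by (intro divide_left_mono) auto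
  also have "\<dots> = t powr (- real DIM('a))"
    using assms by (simp add: powr_diff[symmetric])
  finally show ?thesis .
qed

lemma kern_le_dist_powr:
  fixes x y :: "'a::euclidean_space"
  assumes "0 < s" "0 < t" "t \<le> R" "x \<noteq> y"
  shows "kern s x t y \<le> R powr (2 * s) / dist x y powr (real DIM('a) + 2 * s)"
proof -
  have "dist x y powr (real DIM('a) + 2 * s) \<le> sqrt ((norm (x - y))\<^sup>2 + t\<^sup>2) powr (real DIM('a) + 2 * s)"
    using assms by (intro powr_mono2 real_le_rsqrt) (auto simp: dist_norm)
  moreover have "t powr (2 * s) \<le> R powr (2 * s)"
    using assms by (intro powr_mono2) auto
  ultimately show ?thesis
    unfolding kern_def using assms by (intro frac_le) auto
qed

section \<open>The Poisson kernel\<close>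

lemma poisson_const_eq:
  "poisson_const s TYPE('a::euclidean_space) = 1 / integral\<^sup>L lborel (kern s (0::'a) 1)"
  unfolding poisson_const_def by (simp add: integral_completion)

lemma poisson_const_nonneg: "0 \<le> poisson_const s TYPE('a::euclidean_space)"
  unfolding poisson_const_eq by (simp add: kern_nonneg)

lemma poisson_kernel_nonneg: "0 \<le> poisson_kernel s x t y"
  unfolding poisson_kernel_def by (simp add: kern_nonneg poisson_const_nonneg)

lemma poisson_kernel_commute: "poisson_kernel s x t y = poisson_kernel s y t x"
  unfolding poisson_kernel_def by (simp add: kern_commute[of s x])

lemma poisson_kernel_measurable [measurable]:
  "(\<lambda>y. poisson_kernel s x t y) \<in> borel_measurable lebesgue"
  unfolding poisson_kernel_def by measurable

lemma poisson_kernel_measurable_pair [measurable]: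
  "(\<lambda>z. poisson_kernel s (fst z) t (snd z))
     \<in> borel_measurable (lebesgue \<Otimes>\<^sub>M (lebesgue :: 'a::euclidean_space measure))"
  unfolding poisson_kernel_def
  by (intro borel_measurable_times borel_measurable_const kern_measurable_pair)

lemma integrable_poisson_kernel:
  fixes x :: "'a::euclidean_space"
  assumes "0 < s" "0 < t"
  shows "integrable lebesgue (poisson_kernel s x t)"
  unfolding poisson_kernel_def[abs_def]
  using integrable_kern[OF assms, of x] by (simp add: integrable_completion)

lemma integral_poisson_kernel:
  fixes x :: "'a::euclidean_space"
  assumes "0 < s" "0 < t"
  shows "(LINT y|lebesgue. poisson_kernel s x t y) = 1"
proof -
  have "(LINT y|lebesgue. poisson_kernel s x t y) = poisson_const s TYPE('a) * integral\<^sup>L lborel (kern s x t)"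
    unfolding poisson_kernel_def by (simp add: integral_completion)
  also have "\<dots> = 1"
    using integral_kern_zero_one_pos[OF assms(1), where 'a='a]
    by (simp add: integral_kern_eq[OF assms(2)] poisson_const_eq)
  finally show ?thesis .
qed

lemma nn_integral_poisson_kernel:
  fixes x :: "'a::euclidean_space"
  assumes "0 < s" "0 < t"
  shows "(\<integral>\<^sup>+y. ennreal (poisson_kernel s x t y) \<partial>lebesgue) = 1"
  using nn_integral_eq_integral[OF integrable_poisson_kernel[OF assms, of x]] integral_poisson_kernel[OF assms, of x]
  by (simp add: poisson_kernel_nonneg)

lemma poisson_kernel_le:
  fixes x y :: "'a::euclidean_space"
  assumes "0 < s" "0 < t"
  shows "poisson_kernel s x t y \<le> poisson_const s TYPE('a) * t powr (- real DIM('a))"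
  unfolding poisson_kernel_def
  by (intro mult_left_mono kern_le_powr_neg_dim[OF assms] poisson_const_nonneg)

lemma poisson_kernel_far_bound:
  fixes s R \<delta> M :: real
  assumes s: "0 < s" and \<delta>: "0 < \<delta>"
  obtains C where "0 \<le> C"
    and "\<And>x t y. norm (x::'a::euclidean_space) \<le> M \<Longrightarrow> 0 < t \<Longrightarrow> t \<le> R \<Longrightarrow> \<delta> \<le> dist x y
           \<Longrightarrow> poisson_kernel s x t y \<le> C / (1 + norm y powr (real DIM('a) + 2 * s))"
proof
  define p where "p = real DIM('a) + 2 * s"
  define C where "C = poisson_const s TYPE('a) * R powr (2 * s) * (\<delta> powr (-p) + (1 + \<bar>M\<bar> / \<delta>) powr p)"
  show "0 \<le> C"
    unfolding C_def by (intro mult_nonneg_nonneg add_nonneg_nonneg poisson_const_nonneg) auto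
  fix x y :: 'a and t
  assume x: "norm x \<le> M" and t: "0 < t" "t \<le> R" and xy: "\<delta> \<le> dist x y"
  have p: "0 < p" "x \<noteq> y" "0 < dist x y powr p"
    using s \<delta> xy by (auto simp: p_def)
  have Cf: "0 < \<delta> powr (-p) + (1 + \<bar>M\<bar> / \<delta>) powr p"
    using \<delta> by (simp add: add_pos_nonneg)
  have "kern s x t y \<le> R powr (2 * s) / dist x y powr p"
    using kern_le_dist_powr[OF s t, of x y] p by (auto simp: p_def)
  also have "\<dots> = R powr (2 * s) * (\<delta> powr (-p) + (1 + \<bar>M\<bar> / \<delta>) powr p)
      / ((\<delta> powr (-p) + (1 + \<bar>M\<bar> / \<delta>) powr p) * dist x y powr p)"
    using Cf by simp
  also have "\<dots> \<le> R powr (2 * s) * (\<delta> powr (-p) + (1 + \<bar>M\<bar> / \<delta>) powr p) / (1 + norm y powr p)"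
    using one_plus_norm_powr_le_dist_powr[of p \<delta> x y "\<bar>M\<bar>"] p \<delta> xy x
    by (intro divide_left_mono) (auto intro!: add_pos_nonneg mult_pos_pos)
  finally show "poisson_kernel s x t y \<le> C / (1 + norm y powr (real DIM('a) + 2 * s))"
    unfolding poisson_kernel_def C_def p_def[symmetric]
    by (metis mult_left_mono poisson_const_nonneg times_divide_eq_right mult.assoc)
qed

lemma integrable_poisson_kernel_mult:
  fixes f :: "'a::euclidean_space \<Rightarrow> real"
  assumes s: "0 < s" and t: "0 < t" and f: "integrable lebesgue f"
  shows "integrable lebesgue (\<lambda>y. poisson_kernel s x t y * f y)"
proof (rule Bochner_Integration.integrable_bound)
  show "integrable lebesgue (\<lambda>y. poisson_const s TYPE('a) * t powr (- real DIM('a)) * f y)"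
    using f by simp
  show "(\<lambda>y. poisson_kernel s x t y * f y) \<in> borel_measurable lebesgue"
    using borel_measurable_integrable[OF f] by measurable
  show "AE y in lebesgue. norm (poisson_kernel s x t y * f y)
      \<le> norm (poisson_const s TYPE('a) * t powr (- real DIM('a)) * f y)"
    using poisson_kernel_le[OF s t, of x] poisson_const_nonneg[of s, where 'a='a]
    by (intro AE_I2) (simp add: abs_mult abs_of_nonneg poisson_kernel_nonneg mult_right_mono)
qed

lemma borel_measurable_nn_integral_poisson_kernel [measurable]:
  fixes g :: "'a::euclidean_space \<Rightarrow> ennreal"
  assumes [measurable]: "g \<in> borel_measurable lebesgue"
  shows "(\<lambda>x. \<integral>\<^sup>+y. ennreal (poisson_kernel s x t y) * g y \<partial>lebesgue) \<in> borel_measurable lebesgue"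
proof -
  interpret sigma_finite_measure "lebesgue :: 'a measure"
    by (rule sigma_finite_lebesgue)
  show ?thesis
    by (rule borel_measurable_nn_integral) measurable
qed

lemma nn_integral_nn_integral_poisson_kernel:
  fixes g :: "'a::euclidean_space \<Rightarrow> ennreal"
  assumes s: "0 < s" and t: "0 < t" and g [measurable]: "g \<in> borel_measurable lebesgue"
  shows "(\<integral>\<^sup>+x. (\<integral>\<^sup>+y. ennreal (poisson_kernel s x t y) * g y \<partial>lebesgue) \<partial>lebesgue)
    = (\<integral>\<^sup>+y. g y \<partial>lebesgue)"
proof -
  interpret pair_sigma_finite "lebesgue :: 'a measure" "lebesgue :: 'a measure"
    by (intro pair_sigma_finite.intro sigma_finite_lebesgue)
  have "(\<integral>\<^sup>+x. (\<integral>\<^sup>+y. ennreal (poisson_kernel s x t y) * g y \<partial>lebesgue) \<partial>lebesgue)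
      = (\<integral>\<^sup>+y. (\<integral>\<^sup>+x. ennreal (poisson_kernel s x t y) * g y \<partial>lebesgue) \<partial>lebesgue)"
    by (rule Fubini'[symmetric]) measurable
  also have "\<dots> = (\<integral>\<^sup>+y. (\<integral>\<^sup>+x. ennreal (poisson_kernel s y t x) \<partial>lebesgue) * g y \<partial>lebesgue)"
    by (simp add: poisson_kernel_commute[of s _ t] nn_integral_multc)
  also have "\<dots> = (\<integral>\<^sup>+y. g y \<partial>lebesgue)"
    by (simp add: nn_integral_poisson_kernel[OF s t])
  finally show ?thesis .
qed

section \<open>Exponential integrability of the extension\<close>

definition Ls_norm :: "real \<Rightarrow> ('a::euclidean_space \<Rightarrow> real) \<Rightarrow> real" where
  "Ls_norm s u = (LINT y|lebesgue. \<bar>u y\<bar> / (1 + norm y powr (real DIM('a) + 2 * s)))"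

lemma set_integrable_L_s:
  assumes "u \<in> L_s s" and "bounded A" and "A \<in> sets lebesgue"
  shows "set_integrable lebesgue A u"
proof -
  have "set_integrable lebesgue (closure A) u"
    using assms(1,2) by (simp add: L_s_def)
  then show ?thesis
    using assms(3) closure_subset by (rule set_integrable_subset)
qed

lemma poisson_kernel_far_part:
  fixes u :: "'a::euclidean_space \<Rightarrow> real"
  assumes u: "u \<in> L_s s" and A [measurable]: "A \<in> sets lebesgue" and C: "0 \<le> C"
    and far: "\<And>y. y \<notin> A \<Longrightarrow> poisson_kernel s x t y \<le> C / (1 + norm y powr (real DIM('a) + 2 * s))"
  shows "integrable lebesgue (\<lambda>y. poisson_kernel s x t y * (indicator (- A) y * u y))"
    and "(LINT y|lebesgue. poisson_kernel s x t y * (indicator (- A) y * u y)) \<le> C * Ls_norm s u"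
proof -
  define w where "w y = \<bar>u y\<bar> / (1 + norm y powr (real DIM('a) + 2 * s))" for y
  have [measurable]: "u \<in> borel_measurable lebesgue" and w: "integrable lebesgue w"
    using u by (simp_all add: L_s_def w_def[abs_def])
  have bound: "\<bar>poisson_kernel s x t y * (indicator (- A) y * u y)\<bar> \<le> C * w y" for y
  proof (cases "y \<in> A")
    case False
    then have "poisson_kernel s x t y * \<bar>u y\<bar> \<le> C / (1 + norm y powr (real DIM('a) + 2 * s)) * \<bar>u y\<bar>"
      using far by (intro mult_right_mono) auto
    then show ?thesis
      using False by (simp add: w_def abs_mult abs_of_nonneg poisson_kernel_nonneg)
  qed (simp add: w_def C)
  show int: "integrable lebesgue (\<lambda>y. poisson_kernel s x t y * (indicator (- A) y * u y))"
  proof (rule Bochner_Integration.integrable_bound)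
    show "integrable lebesgue (\<lambda>y. C * w y)"
      using w by simp
    show "(\<lambda>y. poisson_kernel s x t y * (indicator (- A) y * u y)) \<in> borel_measurable lebesgue"
      by measurable
    show "AE y in lebesgue. norm (poisson_kernel s x t y * (indicator (- A) y * u y)) \<le> norm (C * w y)"
      using bound C by (intro AE_I2) (simp add: w_def)
  qed
  have "(LINT y|lebesgue. poisson_kernel s x t y * (indicator (- A) y * u y)) \<le> (LINT y|lebesgue. C * w y)"
    using w bound by (intro Bochner_Integration.integral_mono[OF int]) (auto dest: abs_le_D1)
  then show "(LINT y|lebesgue. poisson_kernel s x t y * (indicator (- A) y * u y)) \<le> C * Ls_norm s u"
    unfolding Ls_norm_def w_def[symmetric] by simp
qed

(* Jensen's inequality for the probability density P((x,t),.) applied to \<alpha> u 1_A; the summand 1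
   bounds the contribution of exp 0 = 1 off A. *)
lemma exp_poisson_kernel_near_part_le:
  fixes u :: "'a::euclidean_space \<Rightarrow> real"
  assumes s: "0 < s" and t: "0 < t" and [measurable]: "u \<in> borel_measurable lebesgue" "A \<in> sets lebesgue"
    and near: "integrable lebesgue (\<lambda>y. poisson_kernel s x t y * (indicator A y * u y))"
    and near_exp: "integrable lebesgue (\<lambda>y. poisson_kernel s x t y * (indicator A y * exp (\<alpha> * u y)))"
  shows "exp (\<alpha> * (LINT y|lebesgue. poisson_kernel s x t y * (indicator A y * u y)))
    \<le> (LINT y|lebesgue. poisson_kernel s x t y * (indicator A y * exp (\<alpha> * u y))) + 1"
proof -
  define P where "P = poisson_kernel s x t"
  define f where "f y = \<alpha> * (indicator A y * u y)" for y
  define g where "g y = indicator A y * exp (\<alpha> * u y)" for y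
  have P: "integrable lebesgue P" "\<And>y. 0 \<le> P y" "integral\<^sup>L lebesgue P = 1"
    using integrable_poisson_kernel[OF s t] integral_poisson_kernel[OF s t]
    by (simp_all add: P_def poisson_kernel_nonneg)
  have Pf: "integrable lebesgue (\<lambda>y. P y * f y)"
    using near by (simp add: P_def f_def mult.left_commute)
  have Pg: "integrable lebesgue (\<lambda>y. P y * g y)"
    using near_exp by (simp add: P_def g_def)
  have exp_f_le: "P y * exp (f y) \<le> P y * g y + P y" for y
    using P(2)[of y] by (simp add: f_def g_def indicator_def)
  have Pexpf: "integrable lebesgue (\<lambda>y. P y * exp (f y))"
  proof (rule Bochner_Integration.integrable_bound)
    show "integrable lebesgue (\<lambda>y. P y * g y + P y)"
      using P(1) Pg by simp
    show "(\<lambda>y. P y * exp (f y)) \<in> borel_measurable lebesgue"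
      unfolding P_def f_def by measurable
    show "AE y in lebesgue. norm (P y * exp (f y)) \<le> norm (P y * g y + P y)"
      using exp_f_le P(2) by (intro AE_I2) (simp add: g_def)
  qed
  have "exp (LINT y|lebesgue. P y * f y) \<le> (LINT y|lebesgue. P y * exp (f y))"
    by (rule exp_integral_le_integral_exp[OF P Pf Pexpf])
  also have "\<dots> \<le> (LINT y|lebesgue. P y * g y + P y)"
    using Pexpf Pg P(1) exp_f_le by (intro Bochner_Integration.integral_mono) auto
  also have "\<dots> = (LINT y|lebesgue. P y * g y) + 1"
    using Pg P by simp
  finally show ?thesis
    by (simp add: P_def f_def g_def mult.left_commute)
qed

lemma exp_ext_le:
  fixes u :: "'a::euclidean_space \<Rightarrow> real"
  assumes s: "0 < s" and t: "0 < t" and u: "u \<in> L_s s" and A [measurable]: "A \<in> sets lebesgue"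
    and A_int: "set_integrable lebesgue A u" "set_integrable lebesgue A (\<lambda>y. exp (\<alpha> * u y))"
    and C: "0 \<le> C" and \<alpha>: "0 \<le> \<alpha>"
    and far: "\<And>y. y \<notin> A \<Longrightarrow> poisson_kernel s x t y \<le> C / (1 + norm y powr (real DIM('a) + 2 * s))"
  shows "exp (\<alpha> * ext s u x t)
    \<le> exp (\<alpha> * C * Ls_norm s u) * ((LINT y|lebesgue. poisson_kernel s x t y * (indicator A y * exp (\<alpha> * u y))) + 1)"
proof -
  define P where "P = poisson_kernel s x t"
  have [measurable]: "u \<in> borel_measurable lebesgue"
    using u by (simp add: L_s_def)
  have near: "integrable lebesgue (\<lambda>y. P y * (indicator A y * u y))"
    and near_exp: "integrable lebesgue (\<lambda>y. P y * (indicator A y * exp (\<alpha> * u y)))"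
    using A_int[unfolded set_integrable_def] by (simp_all add: P_def integrable_poisson_kernel_mult[OF s t])
  note far_part = poisson_kernel_far_part[OF u A C far, folded P_def]
  have "ext s u x t = (LINT y|lebesgue. P y * (indicator A y * u y))
      + (LINT y|lebesgue. P y * (indicator (- A) y * u y))"
    unfolding ext_def P_def[symmetric]
    by (subst Bochner_Integration.integral_add[OF near far_part(1), symmetric])
      (auto intro!: Bochner_Integration.integral_cong split: split_indicator)
  then have "exp (\<alpha> * ext s u x t) = exp (\<alpha> * (LINT y|lebesgue. P y * (indicator A y * u y)))
      * exp (\<alpha> * (LINT y|lebesgue. P y * (indicator (- A) y * u y)))"
    by (simp add: distrib_left exp_add)
  also have "\<dots> \<le> ((LINT y|lebesgue. P y * (indicator A y * exp (\<alpha> * u y))) + 1) * exp (\<alpha> * C * Ls_norm s u)"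
  proof (rule mult_mono)
    show "exp (\<alpha> * (LINT y|lebesgue. P y * (indicator A y * u y)))
        \<le> (LINT y|lebesgue. P y * (indicator A y * exp (\<alpha> * u y))) + 1"
      using exp_poisson_kernel_near_part_le[OF s t _ A near[unfolded P_def] near_exp[unfolded P_def]]
      by (simp add: P_def)
    show "exp (\<alpha> * (LINT y|lebesgue. P y * (indicator (- A) y * u y))) \<le> exp (\<alpha> * C * Ls_norm s u)"
      using far_part(2) \<alpha> by (simp add: mult.assoc mult_left_mono)
    show "0 \<le> (LINT y|lebesgue. P y * (indicator A y * exp (\<alpha> * u y))) + 1"
      by (simp add: P_def poisson_kernel_nonneg add_nonneg_nonneg)
  qed simp
  finally show ?thesis
    by (simp add: P_def mult.commute)
qed

lemma ennreal_exp_ext_le: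
  fixes u :: "'a::euclidean_space \<Rightarrow> real"
  assumes s: "0 < s" and t: "0 < t" and u: "u \<in> L_s s" and A: "A \<in> sets lebesgue"
    and A_int: "set_integrable lebesgue A u" "set_integrable lebesgue A (\<lambda>y. exp (\<alpha> * u y))"
    and C: "0 \<le> C" and \<alpha>: "0 \<le> \<alpha>" and c: "0 \<le> c"
    and far: "\<And>y. y \<notin> A \<Longrightarrow> poisson_kernel s x t y \<le> C / (1 + norm y powr (real DIM('a) + 2 * s))"
  shows "ennreal (c * exp (\<alpha> * ext s u x t)) \<le> ennreal (c * exp (\<alpha> * C * Ls_norm s u))
    * (1 + (\<integral>\<^sup>+y. ennreal (poisson_kernel s x t y) * ennreal (indicator A y * exp (\<alpha> * u y)) \<partial>lebesgue))"
proof -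
  define E where "E = c * exp (\<alpha> * C * Ls_norm s u)"
  define L where "L = (LINT y|lebesgue. poisson_kernel s x t y * (indicator A y * exp (\<alpha> * u y)))"
  have "integrable lebesgue (\<lambda>y. poisson_kernel s x t y * (indicator A y * exp (\<alpha> * u y)))"
    using integrable_poisson_kernel_mult[OF s t A_int(2)[unfolded set_integrable_def]] by simp
  then have L: "0 \<le> L"
    "(\<integral>\<^sup>+y. ennreal (poisson_kernel s x t y) * ennreal (indicator A y * exp (\<alpha> * u y)) \<partial>lebesgue) = ennreal L"
    unfolding L_def by (simp_all add: poisson_kernel_nonneg nn_integral_eq_integral flip: ennreal_mult)
  have "c * exp (\<alpha> * ext s u x t) \<le> E * (1 + L)"
    using exp_ext_le[OF s t u A A_int C \<alpha> far] c
    by (simp add: E_def L_def mult_left_mono mult.assoc add.commute)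
  then have "ennreal (c * exp (\<alpha> * ext s u x t)) \<le> ennreal (E * (1 + L))"
    by (rule ennreal_leI)
  also have "\<dots> = ennreal E * (1 + ennreal L)"
    using L(1) c by (simp add: E_def ennreal_mult ennreal_plus)
  finally show ?thesis
    unfolding L(2) E_def .
qed

(* The constant factor c is built in: pulling it out of the x-integral afterwards would need
   measurability of u-bar in x, which the argument otherwise avoids. *)
lemma nn_integral_exp_ext_le:
  fixes u :: "'a::euclidean_space \<Rightarrow> real"
  assumes s: "0 < s" and t: "0 < t" and u: "u \<in> L_s s" and A [measurable]: "A \<in> sets lebesgue"
    and A_int: "set_integrable lebesgue A u" "set_integrable lebesgue A (\<lambda>y. exp (\<alpha> * u y))"
    and C: "0 \<le> C" and \<alpha>: "0 \<le> \<alpha>" and c: "0 \<le> c" and X [measurable]: "X \<in> sets lebesgue"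
    and far: "\<And>x y. x \<in> X \<Longrightarrow> y \<notin> A
      \<Longrightarrow> poisson_kernel s x t y \<le> C / (1 + norm y powr (real DIM('a) + 2 * s))"
  shows "(\<integral>\<^sup>+x. ennreal (c * exp (\<alpha> * ext s u x t)) * indicator X x \<partial>lebesgue)
    \<le> ennreal (c * exp (\<alpha> * C * Ls_norm s u))
      * (emeasure lebesgue X + (\<integral>\<^sup>+y. ennreal (indicator A y * exp (\<alpha> * u y)) \<partial>lebesgue))"
proof -
  define g where "g y = ennreal (indicator A y * exp (\<alpha> * u y))" for y
  have [measurable]: "u \<in> borel_measurable lebesgue"
    using u by (simp add: L_s_def)
  have [measurable]: "g \<in> borel_measurable lebesgue"
    unfolding g_def by measurable
  have "(\<integral>\<^sup>+x. ennreal (c * exp (\<alpha> * ext s u x t)) * indicator X x \<partial>lebesgue)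
      \<le> (\<integral>\<^sup>+x. ennreal (c * exp (\<alpha> * C * Ls_norm s u))
        * (indicator X x + (\<integral>\<^sup>+y. ennreal (poisson_kernel s x t y) * g y \<partial>lebesgue)) \<partial>lebesgue)"
    using ennreal_exp_ext_le[OF s t u A A_int C \<alpha> c far]
    by (intro nn_integral_mono) (simp add: g_def split: split_indicator)
  also have "\<dots> = ennreal (c * exp (\<alpha> * C * Ls_norm s u))
      * (\<integral>\<^sup>+x. indicator X x + (\<integral>\<^sup>+y. ennreal (poisson_kernel s x t y) * g y \<partial>lebesgue) \<partial>lebesgue)"
    by (rule nn_integral_cmult) measurable
  also have "\<dots> = ennreal (c * exp (\<alpha> * C * Ls_norm s u)) * (emeasure lebesgue X + (\<integral>\<^sup>+y. g y \<partial>lebesgue))"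
    by (subst nn_integral_add) (simp_all add: nn_integral_nn_integral_poisson_kernel[OF s t])
  finally show ?thesis
    by (simp add: g_def)
qed

lemma nn_integral_exp_ext_uniform_bound:
  fixes u :: "'a::euclidean_space \<Rightarrow> real"
  assumes s: "0 < s" and \<alpha>: "0 \<le> \<alpha>" and u: "u \<in> L_s s" and "open \<Omega>"
    and exp_int: "set_integrable lebesgue \<Omega> (\<lambda>x. exp (\<alpha> * u x))"
    and \<Omega>0: "\<Omega>0 \<in> sets lebesgue" "compact (closure \<Omega>0)" "closure \<Omega>0 \<subseteq> \<Omega>"
  obtains B where "B < \<infinity>" and "\<And>c t. 0 \<le> c \<Longrightarrow> 0 < t \<Longrightarrow> t \<le> R
    \<Longrightarrow> (\<integral>\<^sup>+x. ennreal (c * exp (\<alpha> * ext s u x t)) * indicator \<Omega>0 x \<partial>lebesgue) \<le> ennreal c * B"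
proof -
  obtain A \<delta> M where A: "open A" "bounded A" "A \<subseteq> \<Omega>" and "0 < \<delta>"
    and M: "\<And>x. x \<in> closure \<Omega>0 \<Longrightarrow> norm x \<le> M"
    and margin: "\<And>x y. x \<in> closure \<Omega>0 \<Longrightarrow> y \<notin> A \<Longrightarrow> \<delta> \<le> dist x y"
    using compact_subset_open_margin[OF \<Omega>0(2) \<open>open \<Omega>\<close> \<Omega>0(3)] by blast
  obtain C where "0 \<le> C" and C: "\<And>x t y. norm (x::'a) \<le> M \<Longrightarrow> 0 < t \<Longrightarrow> t \<le> R \<Longrightarrow> \<delta> \<le> dist x y
      \<Longrightarrow> poisson_kernel s x t y \<le> C / (1 + norm y powr (real DIM('a) + 2 * s))"
    using poisson_kernel_far_bound[OF s \<open>0 < \<delta>\<close>] by blast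
  have A_sets: "A \<in> sets lebesgue"
    using A(1) by (simp add: sets_completionI_sets)
  have A_int: "set_integrable lebesgue A u" "set_integrable lebesgue A (\<lambda>y. exp (\<alpha> * u y))"
    using set_integrable_L_s[OF u A(2) A_sets] set_integrable_subset[OF exp_int A_sets A(3)] by auto
  define B where "B = ennreal (exp (\<alpha> * C * Ls_norm s u))
    * (emeasure lebesgue \<Omega>0 + (\<integral>\<^sup>+y. ennreal (indicator A y * exp (\<alpha> * u y)) \<partial>lebesgue))"
  have "emeasure lebesgue \<Omega>0 \<le> emeasure lebesgue (closure \<Omega>0)"
    using \<Omega>0(1) closure_subset by (intro emeasure_mono) auto
  also have "\<dots> < \<infinity>"
    using emeasure_bounded_finite[OF compact_imp_bounded[OF \<Omega>0(2)]] by (simp add: emeasure_completion)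
  finally have "emeasure lebesgue \<Omega>0 < \<infinity>" .
  moreover have "(\<integral>\<^sup>+y. ennreal (indicator A y * exp (\<alpha> * u y)) \<partial>lebesgue) < \<infinity>"
    using A_int(2) unfolding set_integrable_def by (simp add: nn_integral_eq_integral)
  ultimately have "B < \<infinity>"
    by (simp add: B_def ennreal_mult_less_top)
  moreover have "(\<integral>\<^sup>+x. ennreal (c * exp (\<alpha> * ext s u x t)) * indicator \<Omega>0 x \<partial>lebesgue) \<le> ennreal c * B"
    if "0 \<le> c" "0 < t" "t \<le> R" for c t
  proof -
    have "poisson_kernel s x t y \<le> C / (1 + norm y powr (real DIM('a) + 2 * s))" if "x \<in> \<Omega>0" "y \<notin> A" for x y
      using C[OF M _ _ margin] \<open>0 < t\<close> \<open>t \<le> R\<close> closure_subset[of \<Omega>0] that by auto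
    from nn_integral_exp_ext_le[OF s \<open>0 < t\<close> u A_sets A_int \<open>0 \<le> C\<close> \<alpha> \<open>0 \<le> c\<close> \<Omega>0(1) this]
    show ?thesis
      using \<open>0 \<le> c\<close> by (simp add: B_def ennreal_mult mult.assoc)
  qed
  ultimately show ?thesis
    by (rule that)
qed

theorem lemmaA1:
  fixes s \<alpha> :: real and \<Omega> :: "'a::euclidean_space set" and u :: "'a \<Rightarrow> real"
  assumes "0 < s" and "s < 1" and "0 < \<alpha>"
    and "open \<Omega>"
    and "u \<in> L_s s"
    and "set_integrable lebesgue \<Omega> (\<lambda>x. exp (\<alpha> * u x))"
  shows "\<forall>\<Omega>0 R. open \<Omega>0 \<and> compact (closure \<Omega>0) \<and> closure \<Omega>0 \<subseteq> \<Omega> \<and> 0 < R \<longrightarrow>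
           (\<integral>\<^sup>+ t. (\<integral>\<^sup>+ x. ennreal (t powr (1 - 2 * s) * exp (\<alpha> * ext s u x t))
                         * indicator \<Omega>0 x \<partial>lebesgue) * indicator {0<..<R} t \<partial>lborel) < \<infinity>"
proof (intro allI impI, elim conjE)
  fix \<Omega>0 :: "'a set" and R :: real
  assume "open \<Omega>0" "compact (closure \<Omega>0)" "closure \<Omega>0 \<subseteq> \<Omega>" "0 < R"
  then have "\<Omega>0 \<in> sets lebesgue"
    by (simp add: sets_completionI_sets)
  then obtain B where "B < \<infinity>" and B: "\<And>c t. 0 \<le> c \<Longrightarrow> 0 < t \<Longrightarrow> t \<le> R
      \<Longrightarrow> (\<integral>\<^sup>+x. ennreal (c * exp (\<alpha> * ext s u x t)) * indicator \<Omega>0 x \<partial>lebesgue) \<le> ennreal c * B"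
    using nn_integral_exp_ext_uniform_bound[where R=R, OF \<open>0 < s\<close> less_imp_le[OF \<open>0 < \<alpha>\<close>] \<open>u \<in> L_s s\<close>
          \<open>open \<Omega>\<close> assms(6) _ \<open>compact (closure \<Omega>0)\<close> \<open>closure \<Omega>0 \<subseteq> \<Omega>\<close>]
    by blast
  show "(\<integral>\<^sup>+ t. (\<integral>\<^sup>+ x. ennreal (t powr (1 - 2 * s) * exp (\<alpha> * ext s u x t))
      * indicator \<Omega>0 x \<partial>lebesgue) * indicator {0<..<R} t \<partial>lborel) < \<infinity>"
    using \<open>s < 1\<close> \<open>0 < R\<close> \<open>B < \<infinity>\<close>
    by (intro nn_integral_powr_weighted_finite[where a="1 - 2 * s"]) (auto intro: B)
qed

end
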